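(* Let $r>0$, $T>0$, let $\sigma_1$ be a nonnegative random variable with $P\{\sigma_1>x\}=L(x)/x^{\alpha}$, where $\alpha>0$ and $L$ is continuous, slowly varying, with $\lim_{x\to\infty}L(x)=\infty$. Let $V$ be uniformly distributed on $(0,T]$ and independent of $\sigma_1$, and let $F_T(x)=P\{e^{-rV}\sigma_1\le x\}$. Then $F_T$ has a regularly varying tail. *)

theory Defs
  imports "HOL-Probability.Probability"
begin

definition slowly_varying :: "(real \<Rightarrow> real) \<Rightarrow> bool" where
  "slowly_varying L \<longleftrightarrow>
     (\<forall>\<^sub>F x in at_top. L x > 0) \<and>
     (\<forall>t>0. ((\<lambda>x. L (t * x) / L x) \<longlongrightarrow> 1) at_top)"

definition regularly_varying_tail :: "(real \<Rightarrow> real) \<Rightarrow> bool" where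
  "regularly_varying_tail F \<longleftrightarrow>
     (\<exists>\<rho> L. slowly_varying L \<and> (\<forall>\<^sub>F x in at_top. 1 - F x = x powr \<rho> * L x))"

end

theory Submission
  imports Defs
begin

text \<open>By independence and Fubini, the tail of \<open>exp (- r V) \<sigma>\<^sub>1\<close> is the mixture
  \<open>G x = E h (x exp (r V))\<close> of dilates of the tail \<open>h y = P{\<sigma>\<^sub>1 > y} = y powr -\<alpha> L y\<close>,
  which is regularly varying of index \<open>-\<alpha>\<close>. Because every dilation factor \<open>exp (r V)\<close> is at
  least 1, the bounds \<open>(t powr -\<alpha> \<plusminus> \<epsilon>) h y\<close> for \<open>h (t y)\<close>, valid for all large \<open>y\<close>, hold at
  every point \<open>x exp (r V)\<close> once \<open>x\<close> is large, and integrate to the same bounds for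
  \<open>G (t x)\<close>. So \<open>G\<close> is regularly varying of index \<open>-\<alpha>\<close> as well.\<close>

definition regularly_varying :: "real \<Rightarrow> (real \<Rightarrow> real) \<Rightarrow> bool" where
  "regularly_varying \<rho> f \<longleftrightarrow>
     (\<forall>\<^sub>F x in at_top. 0 < f x) \<and> (\<forall>t>0. ((\<lambda>x. f (t * x) / f x) \<longlongrightarrow> t powr \<rho>) at_top)"

lemma slowly_varying_iff_regularly_varying_0:
  "slowly_varying L \<longleftrightarrow> regularly_varying 0 L"
  unfolding slowly_varying_def regularly_varying_def by (auto cong: all_cong)

lemma eventually_at_top_scale:
  fixes t :: real
  assumes "t > 0" and "\<forall>\<^sub>F x in at_top. P x"
  shows "\<forall>\<^sub>F x in at_top. P (t * x)"
proof -
  have "filterlim (\<lambda>x. t * x) at_top at_top"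
    using assms(1) by (intro filterlim_tendsto_pos_mult_at_top[OF tendsto_const] filterlim_ident)
  then show ?thesis using assms(2) by (rule eventually_compose_filterlim[rotated])
qed

lemma regularly_varying_cong:
  assumes "regularly_varying \<rho> f" and eq: "\<forall>\<^sub>F x in at_top. f x = g x"
  shows "regularly_varying \<rho> g"
  unfolding regularly_varying_def
proof (intro conjI allI impI)
  show "\<forall>\<^sub>F x in at_top. 0 < g x"
    using assms unfolding regularly_varying_def by (auto elim: eventually_elim2)
  fix t :: real assume t: "t > 0"
  have "\<forall>\<^sub>F x in at_top. f (t * x) / f x = g (t * x) / g x"
    using eventually_at_top_scale[OF t eq] eq by eventually_elim simp
  with t assms(1) show "((\<lambda>x. g (t * x) / g x) \<longlongrightarrow> t powr \<rho>) at_top"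
    unfolding regularly_varying_def by (auto intro: tendsto_cong[THEN iffD1])
qed

lemma regularly_varying_powr_mult:
  assumes "regularly_varying \<rho> f"
  shows "regularly_varying (\<sigma> + \<rho>) (\<lambda>x. x powr \<sigma> * f x)"
  unfolding regularly_varying_def
proof (intro conjI allI impI)
  show "\<forall>\<^sub>F x in at_top. 0 < x powr \<sigma> * f x"
  proof -
    have "\<forall>\<^sub>F x in at_top. 0 < f x"
      using assms unfolding regularly_varying_def by simp
    then show ?thesis using eventually_gt_at_top[of 0] by eventually_elim simp
  qed
  fix t :: real assume t: "t > 0"
  have "((\<lambda>x. t powr \<sigma> * (f (t * x) / f x)) \<longlongrightarrow> t powr \<sigma> * t powr \<rho>) at_top"
    using assms t unfolding regularly_varying_def by (intro tendsto_mult tendsto_const) auto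
  moreover have "\<forall>\<^sub>F x in at_top.
      t powr \<sigma> * (f (t * x) / f x) = (t * x) powr \<sigma> * f (t * x) / (x powr \<sigma> * f x)"
    using eventually_gt_at_top[of 0] by eventually_elim (use t in \<open>simp add: powr_mult\<close>)
  ultimately show "((\<lambda>x. (t * x) powr \<sigma> * f (t * x) / (x powr \<sigma> * f x)) \<longlongrightarrow> t powr (\<sigma> + \<rho>)) at_top"
    by (simp add: tendsto_cong powr_add)
qed

lemma regularly_varying_div_powr:
  assumes "slowly_varying L" and "\<forall>\<^sub>F y in at_top. f y = L y / y powr \<alpha>"
  shows "regularly_varying (- \<alpha>) f"
proof (rule regularly_varying_cong)
  show "regularly_varying (- \<alpha>) (\<lambda>y. y powr - \<alpha> * L y)"
    using regularly_varying_powr_mult[of 0 L "- \<alpha>"] assms(1)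
    by (simp add: slowly_varying_iff_regularly_varying_0)
  show "\<forall>\<^sub>F y in at_top. y powr - \<alpha> * L y = f y"
    using assms(2) eventually_gt_at_top[of 0]
    by eventually_elim (simp add: powr_minus divide_inverse mult.commute)
qed

lemma regularly_varying_tailI:
  assumes "regularly_varying \<rho> (\<lambda>x. 1 - F x)"
  shows "regularly_varying_tail F"
proof -
  define L where "L x = x powr (- \<rho>) * (1 - F x)" for x
  have "regularly_varying 0 L"
    using regularly_varying_powr_mult[OF assms, of "- \<rho>"] unfolding L_def by simp
  then have "slowly_varying L" by (simp add: slowly_varying_iff_regularly_varying_0)
  moreover have "\<forall>\<^sub>F x in at_top. 1 - F x = x powr \<rho> * L x"
    using eventually_gt_at_top[of 0]
    by eventually_elim (simp add: L_def powr_minus)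
  ultimately show ?thesis unfolding regularly_varying_tail_def by blast
qed

lemma ratio_tendsto_iff_eventually_bounds:
  fixes f g :: "'a \<Rightarrow> real"
  assumes g: "\<forall>\<^sub>F x in F. 0 < g x"
  shows "((\<lambda>x. f x / g x) \<longlongrightarrow> c) F \<longleftrightarrow>
         (\<forall>e>0. \<forall>\<^sub>F x in F. (c - e) * g x \<le> f x \<and> f x \<le> (c + e) * g x)"
proof
  assume lim: "((\<lambda>x. f x / g x) \<longlongrightarrow> c) F"
  show "\<forall>e>0. \<forall>\<^sub>F x in F. (c - e) * g x \<le> f x \<and> f x \<le> (c + e) * g x"
  proof (intro allI impI)
    fix e :: real assume "e > 0"
    with lim have "\<forall>\<^sub>F x in F. dist (f x / g x) c < e" by (rule tendstoD)
    with g show "\<forall>\<^sub>F x in F. (c - e) * g x \<le> f x \<and> f x \<le> (c + e) * g x"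
      by eventually_elim (auto simp: dist_real_def abs_less_iff field_simps)
  qed
next
  assume bounds: "\<forall>e>0. \<forall>\<^sub>F x in F. (c - e) * g x \<le> f x \<and> f x \<le> (c + e) * g x"
  show "((\<lambda>x. f x / g x) \<longlongrightarrow> c) F"
  proof (rule tendstoI)
    fix e :: real assume "e > 0"
    with bounds have "\<forall>\<^sub>F x in F. (c - e / 2) * g x \<le> f x \<and> f x \<le> (c + e / 2) * g x"
      by simp
    with g show "\<forall>\<^sub>F x in F. dist (f x / g x) c < e"
    proof eventually_elim
      case (elim x)
      moreover have "0 < e * g x" using \<open>e > 0\<close> elim by simp
      ultimately have "c - e < f x / g x" "f x / g x < c + e"
        by (auto simp: field_simps)
      then show ?case by (simp add: dist_real_def abs_less_iff)
    qed
  qed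
qed

lemma (in prob_space) indep_var_emeasure_Pair:
  assumes indep: "indep_var S X T Y" and A: "A \<in> sets (S \<Otimes>\<^sub>M T)"
  shows "emeasure M {\<omega>\<in>space M. (X \<omega>, Y \<omega>) \<in> A} =
         (\<integral>\<^sup>+ y. emeasure M {\<omega>\<in>space M. (X \<omega>, y) \<in> A} \<partial>distr M T Y)"
proof -
  have X [measurable]: "X \<in> M \<rightarrow>\<^sub>M S" and Y [measurable]: "Y \<in> M \<rightarrow>\<^sub>M T"
    and joint: "distr M S X \<Otimes>\<^sub>M distr M T Y = distr M (S \<Otimes>\<^sub>M T) (\<lambda>\<omega>. (X \<omega>, Y \<omega>))"
    using indep unfolding indep_var_distribution_eq by auto
  interpret PX: prob_space "distr M S X" by (rule prob_space_distr) simp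
  interpret PY: prob_space "distr M T Y" by (rule prob_space_distr) simp
  interpret XY: pair_prob_space "distr M S X" "distr M T Y" ..
  have A': "A \<in> sets (distr M S X \<Otimes>\<^sub>M distr M T Y)"
    using A by (simp add: sets_pair_measure_cong[of "distr M S X" S "distr M T Y" T])
  have "emeasure M {\<omega>\<in>space M. (X \<omega>, Y \<omega>) \<in> A} =
        emeasure (distr M S X \<Otimes>\<^sub>M distr M T Y) A"
    using A by (simp add: joint emeasure_distr vimage_def Int_def conj_commute)
  also have "\<dots> = (\<integral>\<^sup>+ y. emeasure (distr M S X) ((\<lambda>x. (x, y)) -` A) \<partial>distr M T Y)"
    using A' by (rule XY.emeasure_pair_measure_alt2)
  also have "\<dots> = (\<integral>\<^sup>+ y. emeasure M {\<omega>\<in>space M. (X \<omega>, y) \<in> A} \<partial>distr M T Y)"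
  proof (rule nn_integral_cong)
    fix y
    have "(\<lambda>x. (x, y)) -` A \<in> sets S" using A by (rule sets_Pair2)
    then show "emeasure (distr M S X) ((\<lambda>x. (x, y)) -` A) = emeasure M {\<omega>\<in>space M. (X \<omega>, y) \<in> A}"
      by (simp add: emeasure_distr vimage_def Int_def conj_commute)
  qed
  finally show ?thesis .
qed

lemma eventually_AE_scale:
  fixes a :: "'a \<Rightarrow> real"
  assumes a: "AE v in N. 1 \<le> a v" and P: "\<forall>\<^sub>F y in at_top. P y"
  shows "\<forall>\<^sub>F x in at_top. AE v in N. P (x * a v)"
proof -
  obtain y0 where y0: "\<And>y. y0 \<le> y \<Longrightarrow> P y"
    using P by (auto simp: eventually_at_top_linorder)
  have "\<forall>\<^sub>F x in at_top. max y0 0 \<le> x" by (rule eventually_ge_at_top)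
  then show ?thesis
  proof eventually_elim
    case (elim x)
    from a show ?case
    proof eventually_elim
      case (elim v)
      then have "x \<le> x * a v" using \<open>max y0 0 \<le> x\<close> by (simp add: mult_le_cancel_left1)
      then show ?case using \<open>max y0 0 \<le> x\<close> by (intro y0) simp
    qed
  qed
qed

lemma (in prob_space) nn_integral_pos:
  assumes "f \<in> borel_measurable M" and pos: "AE x in M. 0 < f x"
  shows "0 < integral\<^sup>N M f"
proof (rule ccontr)
  assume "\<not> 0 < integral\<^sup>N M f"
  then have "AE x in M. f x = 0"
    using assms(1) by (simp add: nn_integral_0_iff_AE)
  with pos have "AE x in M. False" by eventually_elim simp
  then show False by (simp add: AE_False)
qed

lemma nn_integral_real_bounds:
  fixes g h :: "'a \<Rightarrow> real"
  assumes [measurable]: "g \<in> borel_measurable N"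
    and bounds: "AE v in N. 0 \<le> g v \<and> c\<^sub>1 * g v \<le> h v \<and> h v \<le> c\<^sub>2 * g v" and "0 \<le> c\<^sub>2"
    and G: "ennreal G = (\<integral>\<^sup>+ v. g v \<partial>N)" "0 \<le> G"
    and H: "ennreal H = (\<integral>\<^sup>+ v. h v \<partial>N)" "0 \<le> H"
  shows "c\<^sub>1 * G \<le> H \<and> H \<le> c\<^sub>2 * G"
proof -
  have cmult: "ennreal (c * G) = (\<integral>\<^sup>+ v. ennreal (c * g v) \<partial>N)" for c
  proof -
    have "AE v in N. ennreal (c * g v) = ennreal c * g v"
      using bounds by eventually_elim (simp add: ennreal_mult'')
    then have "(\<integral>\<^sup>+ v. ennreal (c * g v) \<partial>N) = (\<integral>\<^sup>+ v. ennreal c * g v \<partial>N)"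
      by (rule nn_integral_cong_AE)
    then show ?thesis by (simp add: nn_integral_cmult G ennreal_mult'')
  qed
  have "ennreal (c\<^sub>1 * G) \<le> ennreal H" "ennreal H \<le> ennreal (c\<^sub>2 * G)"
    unfolding cmult H
    by (intro nn_integral_mono_AE, use bounds in eventually_elim, simp add: ennreal_leI)+
  then show ?thesis using \<open>0 \<le> c\<^sub>2\<close> G(2) H(2) by simp
qed

lemma regularly_varying_nn_integral_scale:
  fixes f G :: "real \<Rightarrow> real" and a :: "'a \<Rightarrow> real"
  assumes "prob_space N" and f: "regularly_varying \<rho> f"
    and [measurable]: "f \<in> borel_measurable borel" "a \<in> borel_measurable N"
    and a: "AE v in N. 1 \<le> a v"
    and G_nonneg: "\<And>x. 0 \<le> G x" and G: "\<And>x. ennreal (G x) = (\<integral>\<^sup>+ v. f (x * a v) \<partial>N)"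
  shows "regularly_varying \<rho> G"
proof -
  interpret prob_space N by fact
  have f_pos: "\<forall>\<^sub>F y in at_top. 0 < f y"
    and f_ratio: "\<And>t. t > 0 \<Longrightarrow> ((\<lambda>y. f (t * y) / f y) \<longlongrightarrow> t powr \<rho>) at_top"
    using f unfolding regularly_varying_def by auto
  have G_pos: "\<forall>\<^sub>F x in at_top. 0 < G x"
    using eventually_AE_scale[OF a f_pos]
  proof eventually_elim
    case (elim x)
    then have "0 < (\<integral>\<^sup>+ v. f (x * a v) \<partial>N)"
      by (intro nn_integral_pos) simp_all
    then show ?case by (simp flip: G)
  qed
  show ?thesis unfolding regularly_varying_def
  proof (intro conjI allI impI G_pos)
    fix t :: real assume t: "t > 0"
    show "((\<lambda>x. G (t * x) / G x) \<longlongrightarrow> t powr \<rho>) at_top"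
      unfolding ratio_tendsto_iff_eventually_bounds[OF G_pos]
    proof (intro allI impI)
      fix e :: real assume "e > 0"
      with f_ratio[OF t] have "\<forall>\<^sub>F y in at_top.
          (t powr \<rho> - e) * f y \<le> f (t * y) \<and> f (t * y) \<le> (t powr \<rho> + e) * f y"
        using ratio_tendsto_iff_eventually_bounds[OF f_pos] by auto
      with f_pos have "\<forall>\<^sub>F y in at_top. 0 \<le> f y \<and>
          (t powr \<rho> - e) * f y \<le> f (t * y) \<and> f (t * y) \<le> (t powr \<rho> + e) * f y"
        by eventually_elim simp
      then have "\<forall>\<^sub>F x in at_top. AE v in N. 0 \<le> f (x * a v) \<and>
          (t powr \<rho> - e) * f (x * a v) \<le> f (t * x * a v) \<and>
          f (t * x * a v) \<le> (t powr \<rho> + e) * f (x * a v)"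
        unfolding mult.assoc by (rule eventually_AE_scale[OF a])
      then show "\<forall>\<^sub>F x in at_top.
          (t powr \<rho> - e) * G x \<le> G (t * x) \<and> G (t * x) \<le> (t powr \<rho> + e) * G x"
        by eventually_elim
           (rule nn_integral_real_bounds; use \<open>e > 0\<close> G G_nonneg in \<open>simp add: add_pos_pos\<close>)
    qed
  qed
qed

lemma (in prob_space) borel_measurable_prob_less:
  fixes X :: "'a \<Rightarrow> real"
  assumes [measurable]: "X \<in> borel_measurable M"
  shows "(\<lambda>y. prob {\<omega>\<in>space M. y < X \<omega>}) \<in> borel_measurable borel"
proof -
  have "mono (\<lambda>y. - prob {\<omega>\<in>space M. y < X \<omega>})"
    by (intro monoI) (auto intro!: finite_measure_mono)
  then have "(\<lambda>y. - (- prob {\<omega>\<in>space M. y < X \<omega>})) \<in> borel_measurable borel"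
    by (intro borel_measurable_uminus borel_measurable_mono)
  then show ?thesis by simp
qed

lemma (in prob_space) prob_less_eq_1_minus_prob_le:
  fixes X :: "'a \<Rightarrow> real"
  assumes [measurable]: "X \<in> borel_measurable M"
  shows "prob {\<omega>\<in>space M. x < X \<omega>} = 1 - prob {\<omega>\<in>space M. X \<omega> \<le> x}"
proof -
  have "{\<omega>\<in>space M. X \<omega> \<le> x} = space M - {\<omega>\<in>space M. x < X \<omega>}" by auto
  moreover have "{\<omega>\<in>space M. x < X \<omega>} \<in> events" by measurable
  ultimately show ?thesis by (simp add: prob_compl)
qed

lemma (in prob_space) indep_var_prob_less_exp_mult:
  fixes X Y :: "'a \<Rightarrow> real"
  assumes indep: "indep_var borel X borel Y"
  shows "ennreal (prob {\<omega>\<in>space M. x < exp (- r * Y \<omega>) * X \<omega>}) =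
         (\<integral>\<^sup>+ y. prob {\<omega>\<in>space M. x * exp (r * y) < X \<omega>} \<partial>distr M borel Y)"
proof -
  define A where "A = {p :: real \<times> real. x * exp (r * snd p) < fst p}"
  have "open A" unfolding A_def by (intro open_Collect_less continuous_intros)
  then have "A \<in> sets (borel \<Otimes>\<^sub>M borel)" unfolding borel_prod by simp
  note Pair_eq = indep_var_emeasure_Pair[OF indep this]
  have "x < exp (- r * y) * s \<longleftrightarrow> x * exp (r * y) < s" for y s
    by (simp add: exp_minus field_simps)
  then have "{\<omega>\<in>space M. (X \<omega>, Y \<omega>) \<in> A} = {\<omega>\<in>space M. x < exp (- r * Y \<omega>) * X \<omega>}"
    by (auto simp: A_def)
  with Pair_eq show ?thesis by (simp add: A_def emeasure_eq_measure)
qed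

theorem lemma3p2:
  fixes M :: "'a measure" and \<sigma>\<^sub>1 V :: "'a \<Rightarrow> real"
    and r T \<alpha> :: real and L :: "real \<Rightarrow> real"
  assumes M: "prob_space M"
    and r: "r > 0" and "T > 0" and "\<alpha> > 0"
    and \<sigma>\<^sub>1_meas: "\<sigma>\<^sub>1 \<in> borel_measurable M" and V_meas: "V \<in> borel_measurable M"
    and "\<forall>\<omega>\<in>space M. \<sigma>\<^sub>1 \<omega> \<ge> 0"
    and \<sigma>\<^sub>1_tail: "\<forall>x>0. measure M {\<omega>\<in>space M. \<sigma>\<^sub>1 \<omega> > x} = L x / x powr \<alpha>"
    and "continuous_on {0<..} L" and L: "slowly_varying L" and "filterlim L at_top at_top"
    and V_uniform: "distr M borel V = uniform_measure lborel {0<..T}"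
    and indep: "prob_space.indep_var M borel \<sigma>\<^sub>1 borel V"
  shows "regularly_varying_tail
           (\<lambda>x. measure M {\<omega>\<in>space M. exp (- r * V \<omega>) * \<sigma>\<^sub>1 \<omega> \<le> x})"
proof -
  interpret prob_space M by (fact M)
  note [measurable] = \<sigma>\<^sub>1_meas V_meas
  define h where "h y = prob {\<omega>\<in>space M. y < \<sigma>\<^sub>1 \<omega>}" for y
  define G where "G x = prob {\<omega>\<in>space M. x < exp (- r * V \<omega>) * \<sigma>\<^sub>1 \<omega>}" for x
  have "\<forall>\<^sub>F y in at_top. h y = L y / y powr \<alpha>"
    using eventually_gt_at_top[of 0] by eventually_elim (simp add: h_def \<sigma>\<^sub>1_tail)
  with L have h_rv: "regularly_varying (- \<alpha>) h"
    by (rule regularly_varying_div_powr)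
  have [measurable]: "h \<in> borel_measurable borel"
    unfolding h_def by (rule borel_measurable_prob_less) simp
  have V_prob: "prob_space (distr M borel V)"
    by (rule prob_space_distr) simp
  have V_scale: "AE v in distr M borel V. 1 \<le> exp (r * v)"
    unfolding V_uniform by (rule AE_uniform_measureI) (use r in auto)
  have "ennreal (G x) = (\<integral>\<^sup>+ v. h (x * exp (r * v)) \<partial>distr M borel V)" for x
    unfolding G_def h_def by (rule indep_var_prob_less_exp_mult[OF indep])
  then have "regularly_varying (- \<alpha>) G"
    by (intro regularly_varying_nn_integral_scale[OF V_prob h_rv _ _ V_scale])
       (simp_all add: G_def)
  moreover have "G = (\<lambda>x. 1 - measure M {\<omega>\<in>space M. exp (- r * V \<omega>) * \<sigma>\<^sub>1 \<omega> \<le> x})"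
    unfolding G_def by (intro ext prob_less_eq_1_minus_prob_le) simp
  ultimately show ?thesis by (intro regularly_varying_tailI) simp
qed

end
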